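(* Fix integers $n,m\ge1$, $k_1,k_2\ge0$ and $N\in\mathbb{N}$. When $\omega\to0$: if $k_2$ is odd, \[p_{1,k_1,k_2}(x,t)=\sum_{h=0}^N\frac{|t|^{2h+1}}{(2h+1)!}p_{1,k_1,k_2+2h+1}(x,0)+O\big(|t|^{2N+3}p_{1,k_1,k_2+2N+3}(x,0)\big);\] if $k_2$ is even, \[p_{1,k_1,k_2}(x,t)=\sum_{h=0}^N\frac{|t|^{2h}}{(2h)!}p_{1,k_1,k_2+2h}(x,0)+O\big(|t|^{2N+2}p_{1,k_1,k_2+2N+2}(x,0)\big).\]
   Context: For integers $n,m\ge1$, $k_1,k_2\ge0$ and $(x,t)\in\mathbb{R}^{2n}\times\mathbb{R}^m$, with $u_1$ the first standard basis vector of $\mathbb{R}^m$, \[p_{1,k_1,k_2}(x,t)=\frac{(-1)^{k_1}i^{k_2}}{(4\pi)^n(2\pi)^m}\int_{\mathbb{R}^m}e^{i|t|(\lambda,u_1)-\frac{|x|^2}{4}|\lambda|\coth|\lambda|}\frac{|\lambda|^{n+k_1}\cosh(|\lambda|)^{k_1}}{\sinh(|\lambda|)^{n+k_1}}(\lambda,u_1)^{k_2}\,d\lambda ,\] and $\omega=4|t|/|x|^2$. *)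

theory Defs
  imports "HOL-Analysis.Analysis"
begin

text \<open>First standard basis vector u_1 of R^m, where R^m is modelled as real^'m
  (m = CARD('m)); the coordinate labelled "first" is a fixed designated index.\<close>
definition u1 :: "real^'m" where
  "u1 = axis (SOME i. True) 1"

text \<open>The heat-kernel-type function p_{1,k1,k2}(x,t), x in R^{2n} (modelled as real^'k
  with CARD('k) = 2n), t in R^m.\<close>
definition p1 :: "nat \<Rightarrow> nat \<Rightarrow> nat \<Rightarrow> real^'k \<Rightarrow> real^'m \<Rightarrow> complex" where
  "p1 n k1 k2 x t =
     ((-1) ^ k1 * \<i> ^ k2 / complex_of_real ((4 * pi) ^ n * (2 * pi) ^ CARD('m))) *
     (\<integral> (l::real^'m). exp (\<i> * complex_of_real (norm t * (l \<bullet> u1))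
                 - complex_of_real (norm x ^ 2 / 4 * norm l * (cosh (norm l) / sinh (norm l))))
            * complex_of_real (norm l ^ (n + k1) * cosh (norm l) ^ k1 / sinh (norm l) ^ (n + k1))
            * complex_of_real ((l \<bullet> u1) ^ k2) \<partial>lborel)"

end

theory Submission
  imports Defs "HOL-Probability.Characteristic_Functions"
begin

text \<open>With \<open>y = (\<lambda>,u1)\<close>, \<open>s = |t|\<close> and a positive radial weight \<open>w\<close> decaying like
  \<open>exp(-|x|^2 |\<lambda>|/4)\<close>, one has \<open>p1 k (x,t) = c i^k \<integral> e^(isy) w(|\<lambda>|) y^k d\<lambda>\<close>, and all moments
  \<open>\<integral> w |y|^j\<close> are finite when \<open>x \<noteq> 0\<close>. Taylor's bound
  \<open>|e^(iu) - \<Sum>\<^sub>j\<^sub>\<le>\<^sub>M (iu)^j/j!| \<le> |u|^(M+1)/(M+1)!\<close> under the integral expands \<open>p1 k (x,t)\<close> as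
  \<open>\<Sum>\<^sub>j\<^sub>\<le>\<^sub>M s^j/j! p1 (k+j) (x,0)\<close> with remainder at most \<open>s^(M+1)/(M+1)!\<close> times the absolute
  moment of order \<open>k+M+1\<close>, which is \<open>|p1 (k+M+1) (x,0)|\<close> when that order is even. The odd
  moments vanish by the symmetry \<open>\<lambda> \<mapsto> -\<lambda>\<close>, so only the terms with the parity of \<open>k\<close> survive.
  The estimate holds for all \<open>x \<noteq> 0\<close> and \<open>t\<close>, uniformly in \<open>\<omega>\<close>.\<close>

lemma le_sinh_real: "0 \<le> (r::real) \<Longrightarrow> r \<le> sinh r"
  using real_le_x_sinh[of r] by (simp add: sinh_field_def exp_minus)

lemma mult_cosh_le_sinh: assumes "0 \<le> (r::real)" shows "r * cosh r \<le> (1 + r) * sinh r"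
proof -
  have "cosh r = sinh r + exp (-r)" using cosh_minus_sinh[of r] by simp
  moreover have "r * exp (-r) \<le> sinh r"
    using le_sinh_real[OF assms] assms by (smt (verit) exp_le_one_iff mult_left_le neg_le_0_iff_le)
  ultimately show ?thesis by (simp add: algebra_simps)
qed

lemma borel_measurable_cosh [measurable]: "(cosh::real \<Rightarrow> real) \<in> borel_measurable borel"
  by (intro borel_measurable_continuous_onI continuous_intros)

lemma borel_measurable_sinh [measurable]: "(sinh::real \<Rightarrow> real) \<in> borel_measurable borel"
  by (intro borel_measurable_continuous_onI continuous_intros)

lemma poly_le_exp_bound:
  assumes "0 < (a::real)"
  obtains C where "\<And>r. 0 \<le> r \<Longrightarrow> (1 + r) ^ K \<le> C * exp (a * r)"
proof
  define d where "d = min 1 (a / (K + 1))"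
  have d: "0 < d" "d \<le> 1" using assms by (auto simp: d_def)
  have dK: "d * K \<le> a"
  proof -
    have "d * K \<le> a / (K + 1) * K" by (intro mult_right_mono) (auto simp: d_def)
    also have "\<dots> \<le> a" using assms by (simp add: field_simps)
    finally show ?thesis .
  qed
  fix r :: real assume r: "0 \<le> r"
  have "d * (1 + r) \<le> 1 + d * r" using d by (simp add: algebra_simps)
  also have "\<dots> \<le> exp (d * r)" by (rule exp_ge_add_one_self)
  finally have "(d * (1 + r)) ^ K \<le> exp (d * r) ^ K" using d r by (intro power_mono) auto
  also have "\<dots> = exp (d * K * r)" by (simp add: exp_of_nat_mult[symmetric] algebra_simps)
  also have "\<dots> \<le> exp (a * r)" using mult_right_mono[OF dK r] by simp
  finally have "d ^ K * (1 + r) ^ K \<le> exp (a * r)" by (simp add: power_mult_distrib)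
  then show "(1 + r) ^ K \<le> (1 / d ^ K) * exp (a * r)"
    using d by (simp add: field_simps)
qed

lemma integrable_exp_minus_abs:
  assumes "0 < c" shows "integrable lborel (\<lambda>y::real. exp (- (c * \<bar>y\<bar>)))"
proof -
  let ?g = "\<lambda>y::real. ennreal (y ^ 0 * exp (- y)) * indicator {0..} y"
  have "(\<integral>\<^sup>+y. ennreal (norm (exp (- \<bar>y::real\<bar>))) \<partial>lborel) \<le> (\<integral>\<^sup>+y. ?g y + ?g (0 + (-1) * y) \<partial>lborel)"
    by (intro nn_integral_mono) (auto simp: indicator_def)
  also have "\<dots> = (\<integral>\<^sup>+y. ?g y \<partial>lborel) + (\<integral>\<^sup>+y. ?g (0 + (-1) * y) \<partial>lborel)"
    by (intro nn_integral_add) auto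
  also have "\<dots> = 2"
    using nn_intergal_power_times_exp_Ici[of 0] nn_integral_real_affine[of ?g "-1" 0] by simp
  also have "\<dots> < \<infinity>" by simp
  finally have "integrable lborel (\<lambda>y::real. exp (- \<bar>y\<bar>))"
    by (intro integrableI_bounded) auto
  from lborel_integrable_real_affine[OF this, of c 0] assms show ?thesis
    by (simp add: abs_mult)
qed

text \<open>In dimension \<open>d\<close>, \<open>c |l| \<ge> (c/d) \<Sum>\<^sub>b |l\<bullet>b|\<close>, and the product of the one-dimensional
  integrals over the basis dominates the integral.\<close>
lemma integrable_exp_minus_norm:
  assumes "0 < c" shows "integrable lborel (\<lambda>l::'a::euclidean_space. exp (- (c * norm l)))"
proof (rule integrableI_bounded)
  define c' where "c' = c / DIM('a)"
  have c': "0 < c'" using assms by (simp add: c'_def)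
  have dominate: "exp (- (c * norm l)) \<le> (\<Prod>b\<in>Basis. exp (- (c' * \<bar>l \<bullet> b\<bar>)))" for l :: 'a
  proof -
    have "(\<Sum>b\<in>Basis. \<bar>l \<bullet> b\<bar>) \<le> (\<Sum>b\<in>(Basis::'a set). norm l)"
      by (intro sum_mono Basis_le_norm)
    then have "c' * (\<Sum>b\<in>Basis. \<bar>l \<bullet> b\<bar>) \<le> c * norm l"
      using assms by (simp add: c'_def field_simps)
    then show ?thesis
      by (simp add: exp_sum[symmetric] sum_negf sum_distrib_left[symmetric])
  qed
  have "(\<integral>\<^sup>+l. ennreal (norm (exp (- (c * norm l)))) \<partial>(lborel::'a measure))
       \<le> (\<integral>\<^sup>+l. (\<Prod>b\<in>Basis. ennreal (exp (- (c' * \<bar>l \<bullet> b\<bar>)))) \<partial>(lborel::'a measure))"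
    by (intro nn_integral_mono) (simp add: prod_ennreal dominate ennreal_leI)
  also have "\<dots> = (\<Prod>b\<in>(Basis::'a set). (\<integral>\<^sup>+y. ennreal (exp (- (c' * \<bar>y\<bar>))) \<partial>lborel))"
    by (rule nn_integral_lborel_prod) auto
  also have "\<dots> < \<infinity>"
    using integrable_exp_minus_abs[OF c'] unfolding integrable_iff_bounded
    by (simp add: power_less_top_ennreal)
  finally show "(\<integral>\<^sup>+l. ennreal (norm (exp (- (c * norm l)))) \<partial>(lborel::'a measure)) < \<infinity>" .
qed measurable

lemma integrable_poly_exp_norm:
  assumes "0 < a"
  shows "integrable lborel (\<lambda>l::'a::euclidean_space. (1 + norm l) ^ K * exp (- (a * norm l)))"
proof -
  obtain C where C: "\<And>r. 0 \<le> r \<Longrightarrow> (1 + r) ^ K \<le> C * exp (a / 2 * r)"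
    using poly_le_exp_bound[of "a / 2"] assms by auto
  have bound: "norm ((1 + norm l) ^ K * exp (- (a * norm l))) \<le> norm (C * exp (- (a / 2 * norm l)))"
    for l :: 'a
  proof -
    have "(1 + norm l) ^ K * exp (- (a * norm l)) \<le> C * exp (a / 2 * norm l) * exp (- (a * norm l))"
      using C[of "norm l"] by (intro mult_right_mono) auto
    also have "\<dots> = C * exp (- (a / 2 * norm l))" by (simp flip: exp_add)
    finally show ?thesis by simp
  qed
  have "integrable lborel (\<lambda>l::'a. C * exp (- (a / 2 * norm l)))"
    by (rule integrable_mult_right[OF integrable_exp_minus_norm]) (use assms in simp)
  then show ?thesis
    by (rule Bochner_Integration.integrable_bound) (use bound in auto)
qed

definition radial_weight :: "nat \<Rightarrow> nat \<Rightarrow> real \<Rightarrow> real \<Rightarrow> real" where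
  "radial_weight n k1 a r =
     exp (- (a * r * (cosh r / sinh r))) * (r ^ (n + k1) * cosh r ^ k1 / sinh r ^ (n + k1))"

lemma borel_measurable_radial_weight [measurable]: "radial_weight n k1 a \<in> borel_measurable borel"
  unfolding radial_weight_def by measurable

lemma radial_weight_nonneg: "0 \<le> r \<Longrightarrow> 0 \<le> radial_weight n k1 a r"
  unfolding radial_weight_def by (intro mult_nonneg_nonneg divide_nonneg_nonneg) auto

lemma radial_weight_le:
  assumes "0 \<le> a" "0 \<le> r"
  shows "radial_weight n k1 a r \<le> (1 + r) ^ k1 * exp (- (a * r))"
proof (cases "r = 0")
  case True then show ?thesis by (simp add: radial_weight_def power_0_left)
next
  case False
  then have r: "0 < r" using assms by simp
  then have s: "0 < sinh r" by simp
  have "a * r * 1 \<le> a * r * (cosh r / sinh r)"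
    using s sinh_le_cosh_real[of r] assms r by (intro mult_left_mono) auto
  then have e: "exp (- (a * r * (cosh r / sinh r))) \<le> exp (- (a * r))" by simp
  have "(r / sinh r) ^ n \<le> 1"
    using le_sinh_real[of r] r s by (intro power_le_one) auto
  moreover have "(r * cosh r / sinh r) ^ k1 \<le> (1 + r) ^ k1"
    using mult_cosh_le_sinh[of r] s r by (intro power_mono) (auto simp: divide_le_eq)
  ultimately have "(r / sinh r) ^ n * (r * cosh r / sinh r) ^ k1 \<le> 1 * (1 + r) ^ k1"
    using s r by (intro mult_mono) auto
  then have "r ^ (n + k1) * cosh r ^ k1 / sinh r ^ (n + k1) \<le> (1 + r) ^ k1"
    by (simp add: power_add power_divide power_mult_distrib field_simps)
  with e r s show ?thesis
    unfolding radial_weight_def by (subst mult.commute) (intro mult_mono; simp)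
qed

lemma integrable_radial_weight_moment:
  fixes v :: "'a::euclidean_space"
  assumes "0 < a"
  shows "integrable lborel (\<lambda>l. radial_weight n k1 a (norm l) * \<bar>l \<bullet> v\<bar> ^ j)"
proof (rule Bochner_Integration.integrable_bound)
  show "integrable lborel (\<lambda>l::'a. norm v ^ j * ((1 + norm l) ^ (k1 + j) * exp (- (a * norm l))))"
    by (intro integrable_mult_right integrable_poly_exp_norm assms)
  have "radial_weight n k1 a (norm l) * \<bar>l \<bullet> v\<bar> ^ j
      \<le> ((1 + norm l) ^ k1 * exp (- (a * norm l))) * (norm v * (1 + norm l)) ^ j" for l :: 'a
  proof (intro mult_mono power_mono)
    show "\<bar>l \<bullet> v\<bar> \<le> norm v * (1 + norm l)"
      using Cauchy_Schwarz_ineq2[of l v] by (smt (verit) mult_left_mono norm_ge_zero mult.commute)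
  qed (use assms radial_weight_le[of a "norm l" n k1] in auto)
  then show "AE l in lborel. norm (radial_weight n k1 a (norm l) * \<bar>l \<bullet> v\<bar> ^ j)
      \<le> norm (norm v ^ j * ((1 + norm l) ^ (k1 + j) * exp (- (a * norm l))))"
    by (intro AE_I2) (simp add: radial_weight_nonneg power_add power_mult_distrib mult_ac)
qed measurable

lemma integral_iexp_taylor_bound:
  fixes w y :: "'a \<Rightarrow> real"
  assumes [measurable]: "w \<in> borel_measurable M" "y \<in> borel_measurable M"
    and w_nonneg: "\<And>l. 0 \<le> w l"
    and moments: "\<And>j. integrable M (\<lambda>l. w l * \<bar>y l\<bar> ^ j)"
  shows "norm ((\<integral>l. iexp (s * y l) * of_real (w l * y l ^ k) \<partial>M)
            - (\<Sum>j\<le>m. (\<i> * s) ^ j / fact j * of_real (\<integral>l. w l * y l ^ (k + j) \<partial>M)))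
         \<le> \<bar>s\<bar> ^ (m + 1) / fact (m + 1) * (\<integral>l. w l * \<bar>y l\<bar> ^ (k + m + 1) \<partial>M)"
proof -
  have int_real: "integrable M (\<lambda>l. w l * y l ^ j)" for j
    by (rule Bochner_Integration.integrable_bound[OF moments[of j]])
      (auto simp: abs_mult power_abs w_nonneg)
  have int: "integrable M (\<lambda>l. iexp (s * y l) * of_real (w l * y l ^ j))" for j
    by (rule Bochner_Integration.integrable_bound[OF moments[of j]])
      (auto simp: norm_mult norm_power abs_mult power_abs w_nonneg)
  define R where "R l = iexp (s * y l) * of_real (w l * y l ^ k)
      - (\<Sum>j\<le>m. (\<i> * s) ^ j / fact j * of_real (w l * y l ^ (k + j)))" for l
  have split: "(\<integral>l. iexp (s * y l) * of_real (w l * y l ^ k) \<partial>M)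
            - (\<Sum>j\<le>m. (\<i> * s) ^ j / fact j * of_real (\<integral>l. w l * y l ^ (k + j) \<partial>M))
      = (\<integral>l. R l \<partial>M)"
    using int int_real unfolding R_def
    by (simp add: integral_diff integral_sum del: of_real_mult of_real_power)
  have pointwise: "norm (R l) \<le> \<bar>s\<bar> ^ (m + 1) / fact (m + 1) * (w l * \<bar>y l\<bar> ^ (k + m + 1))" for l
  proof -
    have "R l = of_real (w l * y l ^ k)
        * (iexp (s * y l) - (\<Sum>j\<le>m. (\<i> * of_real (s * y l)) ^ j / fact j))"
      by (simp add: R_def sum_distrib_left power_add power_mult_distrib algebra_simps)
    also have "norm \<dots> \<le> (w l * \<bar>y l\<bar> ^ k) * (\<bar>s * y l\<bar> ^ Suc m / fact (Suc m))"
      unfolding norm_mult using w_nonneg[of l]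
      by (intro mult_mono iexp_approx1) (auto simp: norm_mult norm_power abs_mult power_abs)
    also have "\<dots> = \<bar>s\<bar> ^ (m + 1) / fact (m + 1) * (w l * \<bar>y l\<bar> ^ (k + m + 1))"
      by (simp add: abs_mult power_mult_distrib power_add)
    finally show ?thesis .
  qed
  have "integrable M R" using int int_real unfolding R_def by (auto simp del: of_real_mult of_real_power)
  then have "norm (\<integral>l. R l \<partial>M) \<le> (\<integral>l. \<bar>s\<bar> ^ (m + 1) / fact (m + 1) * (w l * \<bar>y l\<bar> ^ (k + m + 1)) \<partial>M)"
    using pointwise by (intro integral_norm_bound[THEN order_trans] integral_mono integrable_norm
        integrable_mult_right moments)
  also have "\<dots> = \<bar>s\<bar> ^ (m + 1) / fact (m + 1) * (\<integral>l. w l * \<bar>y l\<bar> ^ (k + m + 1) \<partial>M)"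
    by simp
  finally show ?thesis unfolding split .
qed

lemma distr_lborel_uminus: "distr lborel borel uminus = (lborel :: 'a::euclidean_space measure)"
proof -
  have "lborel = density (distr lborel borel (\<lambda>x::'a. 0 + (-1) *\<^sub>R x)) (\<lambda>_. \<bar>-1::real\<bar> ^ DIM('a))"
    by (rule lborel_affine) simp
  then show ?thesis by (simp add: density_1)
qed

lemma lborel_integral_odd_eq_0:
  fixes f :: "'a::euclidean_space \<Rightarrow> 'b::{banach, second_countable_topology}"
  assumes [measurable]: "f \<in> borel_measurable borel" and odd: "\<And>l. f (- l) = - f l"
  shows "(\<integral>l. f l \<partial>lborel) = 0"
proof -
  have "(\<integral>l. f l \<partial>lborel) = (\<integral>l. f l \<partial>distr lborel borel uminus)"
    by (simp add: distr_lborel_uminus)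
  also have "\<dots> = (\<integral>l. - f l \<partial>lborel)"
    by (subst integral_distr) (auto simp: odd)
  finally have "2 *\<^sub>R (\<integral>l. f l \<partial>lborel) = 0"
    by (metis Bochner_Integration.integral_minus add.right_inverse scaleR_2)
  then show ?thesis by simp
qed

lemma p1_eq_integral:
  "p1 n k1 k x t = (-1) ^ k1 * \<i> ^ k / complex_of_real ((4 * pi) ^ n * (2 * pi) ^ CARD('m))
     * (\<integral>(l::real^'m). iexp (norm t * (l \<bullet> u1))
          * of_real (radial_weight n k1 (norm x ^ 2 / 4) (norm l) * (l \<bullet> u1) ^ k) \<partial>lborel)"
  for t :: "real^'m"
proof -
  have integrand: "exp (\<i> * of_real (s * y) - of_real b) * of_real P * of_real (y ^ k)
      = iexp (s * y) * of_real (exp (- b) * P * y ^ k)" for s y b P :: real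
    by (simp add: exp_diff exp_minus exp_of_real field_simps)
  show ?thesis unfolding p1_def radial_weight_def integrand ..
qed

lemma p1_at_0:
  "p1 n k1 k x (0::real^'m) = (-1) ^ k1 * \<i> ^ k / complex_of_real ((4 * pi) ^ n * (2 * pi) ^ CARD('m))
     * of_real (\<integral>(l::real^'m). radial_weight n k1 (norm x ^ 2 / 4) (norm l) * (l \<bullet> u1) ^ k \<partial>lborel)"
  unfolding p1_eq_integral by (simp flip: integral_complex_of_real)

lemma p1_at_0_odd: "odd k \<Longrightarrow> p1 n k1 k x (0::real^'m) = 0"
  unfolding p1_at_0 by (subst lborel_integral_odd_eq_0) auto

lemma norm_p1_at_0_even:
  assumes "even k"
  shows "norm (p1 n k1 k x (0::real^'m))
    = (\<integral>(l::real^'m). radial_weight n k1 (norm x ^ 2 / 4) (norm l) * \<bar>l \<bullet> u1\<bar> ^ k \<partial>lborel)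
        / ((4 * pi) ^ n * (2 * pi) ^ CARD('m))"
proof -
  have "0 \<le> (\<integral>(l::real^'m). radial_weight n k1 (norm x ^ 2 / 4) (norm l) * \<bar>l \<bullet> u1\<bar> ^ k \<partial>lborel)"
    by (intro integral_nonneg_AE AE_I2 mult_nonneg_nonneg radial_weight_nonneg) auto
  then show ?thesis
    unfolding p1_at_0 using assms by (simp add: norm_mult norm_divide norm_power power_even_abs)
qed

text \<open>For an even order \<open>k + m + 1\<close> the absolute moment bounding the Taylor remainder is
  again a value of \<open>p1\<close> at \<open>t = 0\<close>.\<close>
lemma p1_taylor_bound:
  fixes x :: "real^'k" and t :: "real^'m"
  assumes "x \<noteq> 0" and "even (k + m + 1)"
  shows "norm (p1 n k1 k x t - (\<Sum>j\<le>m. of_real (norm t ^ j / fact j) * p1 n k1 (k + j) x (0::real^'m)))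
    \<le> norm t ^ (m + 1) / fact (m + 1) * norm (p1 n k1 (k + m + 1) x (0::real^'m))"
proof -
  define a where "a = norm x ^ 2 / 4"
  define c where "c = (-1) ^ k1 / complex_of_real ((4 * pi) ^ n * (2 * pi) ^ CARD('m))"
  define w where "w l = radial_weight n k1 a (norm l)" for l :: "real^'m"
  define y where "y l = l \<bullet> u1" for l :: "real^'m"
  have "0 < a" using assms(1) by (simp add: a_def)
  have at_t: "p1 n k1 k x t = c * \<i> ^ k * (\<integral>l. iexp (norm t * y l) * of_real (w l * y l ^ k) \<partial>lborel)"
    unfolding p1_eq_integral c_def a_def w_def y_def by simp
  have at_0: "p1 n k1 j x (0::real^'m) = c * \<i> ^ j * of_real (\<integral>l. w l * y l ^ j \<partial>lborel)" for j
    unfolding p1_at_0 c_def a_def w_def y_def by simp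
  have "p1 n k1 k x t - (\<Sum>j\<le>m. of_real (norm t ^ j / fact j) * p1 n k1 (k + j) x (0::real^'m))
      = c * \<i> ^ k * ((\<integral>l. iexp (norm t * y l) * of_real (w l * y l ^ k) \<partial>lborel)
          - (\<Sum>j\<le>m. (\<i> * norm t) ^ j / fact j * of_real (\<integral>l. w l * y l ^ (k + j) \<partial>lborel)))"
    unfolding at_t at_0 by (simp add: sum_distrib_left power_add power_mult_distrib algebra_simps)
  also have "norm \<dots> \<le> norm c * (norm t ^ (m + 1) / fact (m + 1)
      * (\<integral>l. w l * \<bar>y l\<bar> ^ (k + m + 1) \<partial>lborel))"
  proof -
    have "w \<in> borel_measurable lborel" "y \<in> borel_measurable lborel"
      unfolding w_def[abs_def] y_def[abs_def] by measurable
    moreover have "integrable lborel (\<lambda>l. w l * \<bar>y l\<bar> ^ j)" for j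
      unfolding w_def y_def by (rule integrable_radial_weight_moment[OF \<open>0 < a\<close>])
    ultimately show ?thesis
      unfolding norm_mult norm_power norm_ii power_one mult_1_right
      using integral_iexp_taylor_bound[of w lborel y "norm t" k m]
      by (intro mult_left_mono) (auto simp: w_def radial_weight_nonneg)
  qed
  also have "\<dots> = norm t ^ (m + 1) / fact (m + 1) * norm (p1 n k1 (k + m + 1) x (0::real^'m))"
    unfolding norm_p1_at_0_even[OF assms(2)]
    by (simp add: c_def a_def w_def y_def norm_divide norm_power del: of_real_mult of_real_power)
  finally show ?thesis .
qed

lemma sum_atMost_parity:
  fixes f :: "nat \<Rightarrow> 'a::comm_monoid_add"
  assumes "\<And>j. j mod 2 \<noteq> e \<Longrightarrow> f j = 0"
  shows "(\<Sum>j\<le>2 * N + 1 + e. f j) = (\<Sum>h=0..N. f (2 * h + e))"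
proof -
  have "(\<Sum>h=0..N. f (2 * h + e)) = (\<Sum>j\<in>(\<lambda>h. 2 * h + e) ` {0..N}. f j)"
    by (simp add: sum.reindex inj_on_def)
  also have "\<dots> = (\<Sum>j\<le>2 * N + 1 + e. f j)"
  proof (rule sum.mono_neutral_left)
    show "(\<lambda>h. 2 * h + e) ` {0..N} \<subseteq> {..2 * N + 1 + e}" by auto
    show "\<forall>j\<in>{..2 * N + 1 + e} - (\<lambda>h. 2 * h + e) ` {0..N}. f j = 0"
    proof
      fix j assume j: "j \<in> {..2 * N + 1 + e} - (\<lambda>h. 2 * h + e) ` {0..N}"
      have "j mod 2 \<noteq> e"
      proof
        assume "j mod 2 = e"
        then have "j = 2 * (j div 2) + e" using div_mult_mod_eq[of j 2] by simp
        moreover have "j div 2 \<in> {0..N}" using j \<open>j mod 2 = e\<close> by auto presburger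
        ultimately show False using j by blast
      qed
      then show "f j = 0" by (rule assms)
    qed
  qed auto
  finally show ?thesis by simp
qed

lemma p1_parity_expansion:
  fixes x :: "real^'k" and t :: "real^'m"
  assumes "x \<noteq> 0" and e: "e = k mod 2"
  shows "norm (p1 n k1 k x t
      - (\<Sum>h=0..N. of_real (norm t ^ (2 * h + e) / fact (2 * h + e)) * p1 n k1 (k + 2 * h + e) x (0::real^'m)))
    \<le> norm t ^ (2 * N + 2 + e) / fact (2 * N + 2 + e) * norm (p1 n k1 (k + 2 * N + 2 + e) x (0::real^'m))"
proof -
  have sum_eq: "(\<Sum>j\<le>2 * N + 1 + e. of_real (norm t ^ j / fact j) * p1 n k1 (k + j) x (0::real^'m))
      = (\<Sum>h=0..N. of_real (norm t ^ (2 * h + e) / fact (2 * h + e)) * p1 n k1 (k + 2 * h + e) x (0::real^'m))"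
  proof (subst sum_atMost_parity)
    show "of_real (norm t ^ j / fact j) * p1 n k1 (k + j) x (0::real^'m) = 0" if "j mod 2 \<noteq> e" for j
    proof -
      have "odd (k + j)" using that e by presburger
      then show ?thesis by (simp add: p1_at_0_odd)
    qed
  qed (use e in \<open>simp_all add: add.assoc\<close>)
  have "even (k + (2 * N + 1 + e) + 1)" using e by presburger
  from p1_taylor_bound[OF assms(1) this, of n k1 t]
  show ?thesis
    unfolding sum_eq by (simp add: add.assoc)
qed

theorem lemma4p8:
  fixes n k1 k2 N :: nat
  assumes "n \<ge> 1" and "CARD('k) = 2 * n"
  shows
   "(odd k2 \<longrightarrow>
      (\<exists>C \<delta>. \<delta> > 0 \<and> (\<forall>(x::real^'k) (t::real^'m). x \<noteq> 0 \<and> 4 * norm t / norm x ^ 2 < \<delta> \<longrightarrow>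
        norm (p1 n k1 k2 x t
              - (\<Sum>h=0..N. complex_of_real (norm t ^ (2*h+1) / fact (2*h+1))
                               * p1 n k1 (k2 + 2*h + 1) x (0::real^'m)))
        \<le> C * norm t ^ (2*N+3) * norm (p1 n k1 (k2 + 2*N + 3) x (0::real^'m))))) \<and>
    (even k2 \<longrightarrow>
      (\<exists>C \<delta>. \<delta> > 0 \<and> (\<forall>(x::real^'k) (t::real^'m). x \<noteq> 0 \<and> 4 * norm t / norm x ^ 2 < \<delta> \<longrightarrow>
        norm (p1 n k1 k2 x t
              - (\<Sum>h=0..N. complex_of_real (norm t ^ (2*h) / fact (2*h))
                               * p1 n k1 (k2 + 2*h) x (0::real^'m)))
        \<le> C * norm t ^ (2*N+2) * norm (p1 n k1 (k2 + 2*N + 2) x (0::real^'m)))))"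
proof (intro conjI impI)
  assume "odd k2"
  then show "\<exists>C \<delta>. \<delta> > 0 \<and> (\<forall>(x::real^'k) (t::real^'m). x \<noteq> 0 \<and> 4 * norm t / norm x ^ 2 < \<delta> \<longrightarrow>
        norm (p1 n k1 k2 x t
              - (\<Sum>h=0..N. complex_of_real (norm t ^ (2*h+1) / fact (2*h+1))
                               * p1 n k1 (k2 + 2*h + 1) x (0::real^'m)))
        \<le> C * norm t ^ (2*N+3) * norm (p1 n k1 (k2 + 2*N + 3) x (0::real^'m)))"
    using p1_parity_expansion[where e = 1 and k = k2 and N = N]
    by (intro exI[of _ "1 / fact (2 * N + 3)"] exI[of _ 1]) (auto simp: odd_iff_mod_2_eq_one numeral_3_eq_3)
next
  assume "even k2"
  then show "\<exists>C \<delta>. \<delta> > 0 \<and> (\<forall>(x::real^'k) (t::real^'m). x \<noteq> 0 \<and> 4 * norm t / norm x ^ 2 < \<delta> \<longrightarrow>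
        norm (p1 n k1 k2 x t
              - (\<Sum>h=0..N. complex_of_real (norm t ^ (2*h) / fact (2*h))
                               * p1 n k1 (k2 + 2*h) x (0::real^'m)))
        \<le> C * norm t ^ (2*N+2) * norm (p1 n k1 (k2 + 2*N + 2) x (0::real^'m)))"
    using p1_parity_expansion[where e = 0 and k = k2 and N = N]
    by (intro exI[of _ "1 / fact (2 * N + 2)"] exI[of _ 1]) auto
qed

end
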